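(* Let $\Omega\subset\mathbb{R}^3$ be a bounded domain with $C^2$ boundary, $T>0$, $\alpha\in(0,1)$, and let $\mathbf{w}:\Omega\times[0,T)\to\mathbb{R}^3$ satisfy $\mathbf{w}\in L^3(0,T;B^\alpha_{3,\infty}(\Omega'))$ for every $\Omega'\subset\subset\Omega$ and $$t\mapsto\sup_{h>0}\frac{\|\mathbf{w}(\cdot,t)\cdot\mathbf{n}(m(\cdot))\|_{L^3(\Omega_h)}}{h^\alpha}\in L^3(0,T).$$ Let $0<h<h_0$ and $l=\frac{h}{16}$. Then, with $C$ independent of $l$ and $h$, $$\|\mathbf{w}^l\cdot\nabla\theta_{h,l}\|_{L^3(0,T;L^3(\Omega_h\setminus\Omega_{h-l}))}\le Cl^{-1}\Big(l^\alpha\|\mathbf{w}\|_{L^3(0,T;B^\alpha_{3,\infty}(\Omega^{h/2}))}+h^\alpha\Big).$$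
   Context: $d(x)=\inf_{y\in\partial\Omega}|x-y|$, $\Omega_\varepsilon=\{x\in\Omega:d(x)<\varepsilon\}$, $\Omega^\varepsilon=\Omega\setminus\overline{\Omega_\varepsilon}$. There is $h_0>0$ (depending on $\Omega$) such that $d\in C^1(\overline{\Omega_{h_0}})$ and each $x\in\Omega_{h_0}$ has a unique $m(x)\in\partial\Omega$ with $d(x)=|x-m(x)|$ and $\nabla d(x)=-\mathbf{n}(m(x))$, $\mathbf{n}$ the outward unit normal. Cut-off: $\eta_{h,l}:\mathbb{R}\to\mathbb{R}$ is smooth with $\eta_{h,l}=0$ on $(-\infty,h-l]$, $\eta_{h,l}=1$ on $[h,\infty)$ and $\|\eta_{h,l}'\|_{L^\infty}\le C/l$; $\theta_{h,l}(x)=\eta_{h,l}(d(x))$. Mollification: $\phi\in C_c^\infty(\mathbb{R}^3)$ nonnegative radial, supported in the unit ball, $\int\phi=1$, $\phi^l(x)=l^{-3}\phi(x/l)$, $\mathbf{w}^l(x,t)=\int_{|y|\le l}\phi^l(y)\mathbf{w}(x-y,t)\,dy$ (componentwise, in space only). Besov norm on a domain $D$: $\|f\|_{B^\alpha_{3,\infty}(D)}=\|f\|_{L^3(D)}+\sup_{|y|>0}|y|^{-\alpha}\|f(\cdot)-f(\cdot-y)\|_{L^3(D\cap(D+\{y\}))}$. *)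

theory Defs
  imports "HOL-Analysis.Analysis"
begin

definition C2_on :: "'a::euclidean_space set \<Rightarrow> ('a \<Rightarrow> real) \<Rightarrow> bool" where
  "C2_on S f \<longleftrightarrow> (\<exists>Df :: 'a \<Rightarrow> ('a \<Rightarrow>\<^sub>L real). \<exists>D2f :: 'a \<Rightarrow> ('a \<Rightarrow>\<^sub>L ('a \<Rightarrow>\<^sub>L real)).
      (\<forall>x\<in>S. (f has_derivative blinfun_apply (Df x)) (at x)) \<and>
      (\<forall>x\<in>S. (Df has_derivative blinfun_apply (D2f x)) (at x)) \<and>
      continuous_on S D2f)"

text \<open>Bounded domain in R^3 with C^2 boundary: near every boundary point, after a rigid
  motion, the domain is the region below the graph of a C^2 function of two variables.\<close>
definition C2_domain :: "(real^3) set \<Rightarrow> bool" where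
  "C2_domain \<Omega> \<longleftrightarrow> open \<Omega> \<and> connected \<Omega> \<and> bounded \<Omega> \<and> \<Omega> \<noteq> {} \<and>
     (\<forall>p\<in>frontier \<Omega>. \<exists>r>0. \<exists>Q \<gamma>. orthogonal_transformation (Q :: real^3 \<Rightarrow> real^3) \<and> C2_on UNIV (\<gamma> :: real \<times> real \<Rightarrow> real) \<and>
        (\<forall>x\<in>ball p r. x \<in> \<Omega> \<longleftrightarrow>
            (Q (x - p)) $ 3 < \<gamma> ((Q (x - p)) $ 1, (Q (x - p)) $ 2)))"

definition partial_d :: "'n::finite \<Rightarrow> (real^'n \<Rightarrow> real) \<Rightarrow> real^'n \<Rightarrow> real" where
  "partial_d i f x = deriv (\<lambda>s. f (x + s *\<^sub>R axis i 1)) 0"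

definition smooth_fun :: "(real^'n::finite \<Rightarrow> real) \<Rightarrow> bool" where
  "smooth_fun f \<longleftrightarrow> (\<forall>is :: 'n list. continuous_on UNIV (foldr partial_d is f) \<and>
      (\<forall>i x. (\<lambda>s. foldr partial_d is f (x + s *\<^sub>R axis i 1)) differentiable (at 0)))"

definition smooth_real :: "(real \<Rightarrow> real) \<Rightarrow> bool" where
  "smooth_real f \<longleftrightarrow> (\<forall>k. (deriv ^^ k) f differentiable_on UNIV)"

definition grad :: "('a::real_inner \<Rightarrow> real) \<Rightarrow> 'a \<Rightarrow> 'a" where
  "grad f x = (THE D. GDERIV f x :> D)"

definition dist_bd :: "(real^3) set \<Rightarrow> real^3 \<Rightarrow> real" where
  "dist_bd \<Omega> x = infdist x (frontier \<Omega>)"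

definition layer :: "(real^3) set \<Rightarrow> real \<Rightarrow> (real^3) set" where
  "layer \<Omega> \<epsilon> = {x\<in>\<Omega>. dist_bd \<Omega> x < \<epsilon>}"

definition inner_part :: "(real^3) set \<Rightarrow> real \<Rightarrow> (real^3) set" where
  "inner_part \<Omega> \<epsilon> = \<Omega> - closure (layer \<Omega> \<epsilon>)"

text \<open>A nearest boundary point m(x) (unique for x in the layer of width h0).\<close>
definition nearest_bd :: "(real^3) set \<Rightarrow> real^3 \<Rightarrow> real^3" where
  "nearest_bd \<Omega> x = (SOME y. y \<in> frontier \<Omega> \<and> dist x y = dist_bd \<Omega> x)"

text \<open>Outward unit normal at a boundary point p: the unit vector nu such that, near p,
  points strictly on the inner side of the tangent plane (up to a cone of any opening)
  lie in Omega and points strictly on the outer side do not.\<close>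
definition is_outward_normal :: "(real^3) set \<Rightarrow> real^3 \<Rightarrow> real^3 \<Rightarrow> bool" where
  "is_outward_normal \<Omega> p \<nu> \<longleftrightarrow> norm \<nu> = 1 \<and>
     (\<forall>\<epsilon>>0. \<exists>\<delta>>0. \<forall>x\<in>ball p \<delta>.
        ((x - p) \<bullet> \<nu> < - \<epsilon> * norm (x - p) \<longrightarrow> x \<in> \<Omega>) \<and>
        ((x - p) \<bullet> \<nu> > \<epsilon> * norm (x - p) \<longrightarrow> x \<notin> \<Omega>))"

definition outward_normal :: "(real^3) set \<Rightarrow> real^3 \<Rightarrow> real^3" where
  "outward_normal \<Omega> p = (THE \<nu>. is_outward_normal \<Omega> p \<nu>)"

definition enn_cbrt :: "ennreal \<Rightarrow> ennreal" where
  "enn_cbrt a = (if a = top then top else ennreal (root 3 (enn2real a)))"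

definition L3_norm :: "(real^3) set \<Rightarrow> (real^3 \<Rightarrow> 'b::real_normed_vector) \<Rightarrow> ennreal" where
  "L3_norm D f = enn_cbrt (\<integral>\<^sup>+ x \<in> D. ennreal (norm (f x) ^ 3) \<partial>lborel)"

definition besov_norm :: "real \<Rightarrow> (real^3) set \<Rightarrow> (real^3 \<Rightarrow> real^3) \<Rightarrow> ennreal" where
  "besov_norm \<alpha> D f = L3_norm D f +
     (SUP y \<in> {y. y \<noteq> 0}. ennreal (norm y powr (- \<alpha>)) *
        L3_norm (D \<inter> ((\<lambda>z. z + y) ` D)) (\<lambda>x. f x - f (x - y)))"

text \<open>L^3(0,T;X) norm, given the X-norm of the function at each time.\<close>
definition L3_time :: "real \<Rightarrow> (real \<Rightarrow> ennreal) \<Rightarrow> ennreal" where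
  "L3_time T N = enn_cbrt (\<integral>\<^sup>+ t \<in> {0..<T}. N t ^ 3 \<partial>lborel)"

definition mollifier_scaled :: "(real^3 \<Rightarrow> real) \<Rightarrow> real \<Rightarrow> real^3 \<Rightarrow> real" where
  "mollifier_scaled \<phi> l x = l powr (-3) * \<phi> ((1 / l) *\<^sub>R x)"

definition mollify :: "(real^3 \<Rightarrow> real) \<Rightarrow> real \<Rightarrow> (real^3 \<Rightarrow> real \<Rightarrow> real^3) \<Rightarrow> real^3 \<Rightarrow> real \<Rightarrow> real^3" where
  "mollify \<phi> l w x t = (LINT y : cball 0 l | lborel. mollifier_scaled \<phi> l y *\<^sub>R w (x - y) t)"

end

theory Submission
  imports Defs
begin

(* On the layer A = Omega_h - Omega_(h-l) the cut-off has gradient -eta'(d) nu with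
   |eta'| <= C_eta / l, and |nu| <= M on Omega_h0 because grad d is continuous up to the
   boundary of that layer. Hence pointwise
     |w^l . grad theta| <= (C_eta / l) (|w . nu| + M |w^l - w|).
   The first term is bounded on Omega_h by h^alpha times the normal-trace quantity. For the
   second, Jensen's inequality gives |w^l - w|^3 <= int phi_l(y) |w(x-y) - w(x)|^3 dy; since
   x and x - y stay in Omega^(h/2) when |y| <= l = h/16, Fubini and the Besov seminorm bound
   its integral over A by (l^alpha |w|_B)^3. Cubing with (a+b)^3 <= 8 (a^3 + b^3),
   integrating in time and taking cube roots gives the estimate with
   C = 2 C_eta (M + |normal-trace quantity|_(L^3(0,T))). *)

lemma enn_cbrt_cube: "enn_cbrt a ^ 3 = a"
proof (cases a)
  case (real r)
  then show ?thesis
    by (simp add: enn_cbrt_def ennreal_power)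
qed (simp add: enn_cbrt_def)

lemma enn_cbrt_power3: "enn_cbrt (a ^ 3) = a"
proof (cases a)
  case (real r)
  then show ?thesis
    by (simp add: enn_cbrt_def ennreal_power real_root_power_cancel)
qed (simp add: enn_cbrt_def)

lemma enn_cbrt_le:
  assumes "a \<le> b ^ 3"
  shows "enn_cbrt a \<le> b"
proof (cases "b = top")
  case False
  then obtain r where r: "b = ennreal r" "r \<ge> 0"
    by (cases b) auto
  then have "a \<le> ennreal (r ^ 3)"
    using assms by (simp add: ennreal_power)
  then obtain s where s: "a = ennreal s" "s \<ge> 0" "s \<le> r ^ 3"
    by (metis ennreal_cases ennreal_le_iff ennreal_neq_top linorder_not_le top.extremum_unique
        zero_le_power r(2) ennreal_less_zero_iff)
  have "root 3 s \<le> root 3 (r ^ 3)"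
    using s by (simp add: real_root_le_iff)
  also have "\<dots> = r"
    using r by (simp add: real_root_power_cancel)
  finally show ?thesis
    using s r by (simp add: enn_cbrt_def)
qed simp

lemma ennreal_le_of_power3_le:
  fixes a b :: ennreal
  assumes "a ^ 3 \<le> b ^ 3"
  shows "a \<le> b"
  using enn_cbrt_le[OF assms] by (simp add: enn_cbrt_power3)

lemma L3_norm_cube: "L3_norm D f ^ 3 = (\<integral>\<^sup>+x\<in>D. ennreal (norm (f x) ^ 3) \<partial>lborel)"
  by (simp add: L3_norm_def enn_cbrt_cube)

lemma L3_time_cube: "L3_time T N ^ 3 = (\<integral>\<^sup>+t\<in>{0..<T}. N t ^ 3 \<partial>lborel)"
  by (simp add: L3_time_def enn_cbrt_cube)

lemma ennreal_add_power3_le: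
  fixes a b :: ennreal
  shows "(a + b) ^ 3 \<le> 8 * (a ^ 3 + b ^ 3)"
proof -
  have "(a + b) ^ 3 \<le> (2 * max a b) ^ 3"
    by (intro power_mono_ennreal) (simp add: mult_2 add_mono)
  also have "\<dots> = 8 * max a b ^ 3"
    by (simp add: power_mult_distrib)
  also have "\<dots> \<le> 8 * (a ^ 3 + b ^ 3)"
    by (intro mult_left_mono) (auto simp: max_def add_increasing add_increasing2)
  finally show ?thesis .
qed

lemma ennreal_power3_add_le:
  fixes a b :: ennreal
  shows "a ^ 3 + b ^ 3 \<le> (a + b) ^ 3"
proof -
  have "(a + b) ^ 3 = a ^ 3 + b ^ 3 + (a * a * b + a * a * b + a * a * b + a * b * b + a * b * b + a * b * b)"
    by (simp add: power3_eq_cube algebra_simps)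
  then show ?thesis
    by (simp add: add_increasing2)
qed

(* No measurability of f is assumed: it is applied to suprema over uncountably many sets. *)
lemma nn_integral_cmult_le:
  fixes r :: real
  assumes r: "0 \<le> r"
  shows "(\<integral>\<^sup>+x. ennreal r * f x \<partial>M) \<le> ennreal r * integral\<^sup>N M f"
proof (cases "r = 0")
  case False
  then have r0: "0 < r"
    using r by simp
  have inv: "ennreal r * ennreal (1 / r) = 1"
    using r0 by (simp add: ennreal_mult'[symmetric])
  show ?thesis
    unfolding nn_integral_def[of M "\<lambda>x. ennreal r * f x"]
  proof (rule SUP_least)
    fix g assume "g \<in> {g. simple_function M g \<and> g \<le> (\<lambda>x. ennreal r * f x)}"
    then have g: "simple_function M g" "\<And>x. g x \<le> ennreal r * f x"
      by (auto simp: le_fun_def)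
    define g' where "g' x = ennreal (1 / r) * g x" for x
    have sg': "simple_function M g'"
      unfolding g'_def[abs_def] using g(1) by auto
    have gg: "g x = ennreal r * g' x" for x
      unfolding g'_def by (simp add: mult.assoc[symmetric] inv)
    have "g' x \<le> f x" for x
    proof -
      have "g' x \<le> ennreal (1 / r) * (ennreal r * f x)"
        unfolding g'_def using g(2)[of x] by (rule mult_left_mono) simp
      also have "\<dots> = f x"
        using inv by (simp add: mult.assoc[symmetric] mult.commute)
      finally show ?thesis .
    qed
    then have "integral\<^sup>S M g' \<le> integral\<^sup>N M f"
      using nn_integral_eq_simple_integral[OF sg'] nn_integral_mono[of M g' f] by simp
    moreover have "integral\<^sup>S M g = ennreal r * integral\<^sup>S M g'"
      using simple_integral_mult[OF sg', of "ennreal r"] by (simp add: gg[abs_def])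
    ultimately show "integral\<^sup>S M g \<le> ennreal r * integral\<^sup>N M f"
      by (simp add: mult_left_mono)
  qed
qed simp

section \<open>Jensen's inequality for the cube\<close>

lemma power3_tangent_le:
  fixes g c :: real
  assumes "0 \<le> g" "0 \<le> c"
  shows "c ^ 3 + 3 * c\<^sup>2 * (g - c) \<le> g ^ 3"
proof -
  have "g ^ 3 - (c ^ 3 + 3 * c\<^sup>2 * (g - c)) = (g - c)\<^sup>2 * (g + 2 * c)"
    by (simp add: power2_eq_square power3_eq_cube algebra_simps)
  also have "\<dots> \<ge> 0"
    using assms by simp
  finally show ?thesis
    by simp
qed

lemma integral_power3_le:
  fixes q g :: "'a \<Rightarrow> real"
  assumes nonneg: "\<And>y. 0 \<le> q y" "\<And>y. 0 \<le> g y"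
    and q: "integrable M q" "integral\<^sup>L M q = 1"
    and int1: "integrable M (\<lambda>y. q y * g y)" and int3: "integrable M (\<lambda>y. q y * g y ^ 3)"
  shows "(\<integral>y. q y * g y \<partial>M) ^ 3 \<le> (\<integral>y. q y * g y ^ 3 \<partial>M)"
proof -
  define c where "c = (\<integral>y. q y * g y \<partial>M)"
  have "0 \<le> c"
    unfolding c_def using nonneg by simp
  \<comment> \<open>Integrate the tangent line of \<open>s \<mapsto> s^3\<close> at \<open>c\<close>.\<close>
  have "c ^ 3 * q y + 3 * c\<^sup>2 * (q y * g y - c * q y) \<le> q y * g y ^ 3" for y
    using mult_left_mono[OF power3_tangent_le[OF nonneg(2) \<open>0 \<le> c\<close>] nonneg(1)]
    by (simp add: algebra_simps)
  then have "(\<integral>y. c ^ 3 * q y + 3 * c\<^sup>2 * (q y * g y - c * q y) \<partial>M) \<le> (\<integral>y. q y * g y ^ 3 \<partial>M)"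
    using q int1 int3 by (intro integral_mono) auto
  moreover have "(\<integral>y. c ^ 3 * q y + 3 * c\<^sup>2 * (q y * g y - c * q y) \<partial>M) = c ^ 3"
    using q int1 by (simp add: c_def)
  ultimately show ?thesis
    by (simp add: c_def)
qed

lemma norm_set_integral_sub_cube_le:
  fixes p :: "'a \<Rightarrow> real" and u :: "'a \<Rightarrow> 'b::{banach, second_countable_topology}"
  assumes p_meas [measurable]: "p \<in> borel_measurable M" and p_nonneg: "\<And>y. 0 \<le> p y"
    and S [measurable]: "S \<in> sets M"
    and p_int: "set_integrable M S p" and p_one: "(LINT y : S | M. p y) = 1"
    and u_meas [measurable]: "u \<in> borel_measurable M"
  shows "ennreal (norm ((LINT y : S | M. p y *\<^sub>R u y) - v) ^ 3)
           \<le> (\<integral>\<^sup>+y\<in>S. ennreal (p y * norm (u y - v) ^ 3) \<partial>M)"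
proof (cases "(\<integral>\<^sup>+y\<in>S. ennreal (p y * norm (u y - v) ^ 3) \<partial>M) = \<infinity>")
  case False
  define q where "q = (\<lambda>y. indicator S y * p y)"
  define g where "g = (\<lambda>y. norm (u y - v))"
  have [measurable]: "q \<in> borel_measurable M"
    unfolding q_def by measurable
  have [measurable]: "g \<in> borel_measurable M"
    unfolding g_def by measurable
  have nonneg: "0 \<le> q y" "0 \<le> g y" for y
    using p_nonneg by (simp_all add: q_def g_def)
  have cube_eq: "(\<integral>\<^sup>+y\<in>S. ennreal (p y * norm (u y - v) ^ 3) \<partial>M) = (\<integral>\<^sup>+y. ennreal (q y * g y ^ 3) \<partial>M)"
    by (intro nn_integral_cong) (simp add: q_def g_def indicator_def)
  have int3: "integrable M (\<lambda>y. q y * g y ^ 3)"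
    using False nonneg by (intro integrableI_nonneg) (auto simp: cube_eq[symmetric] top.not_eq_extremum)
  have int0: "integrable M q" and q_one: "integral\<^sup>L M q = 1"
    using p_int p_one by (simp_all add: set_integrable_def set_lebesgue_integral_def q_def)
  have "q y * g y \<le> q y + q y * g y ^ 3" for y
  proof -
    have "g y \<le> 1 + g y ^ 3"
      using power_increasing[of 1 3 "g y"] nonneg(2)[of y]
      by (cases "g y \<le> 1") (auto intro: add_increasing2)
    then have "q y * g y \<le> q y * (1 + g y ^ 3)"
      using nonneg(1) by (rule mult_left_mono)
    then show ?thesis
      by (simp add: distrib_left)
  qed
  then have int1: "integrable M (\<lambda>y. q y * g y)"
    using nonneg
    by (intro Bochner_Integration.integrable_bound[OF Bochner_Integration.integrable_add[OF int0 int3]]) auto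
  define V where "V = (\<lambda>y. indicator S y *\<^sub>R (p y *\<^sub>R (u y - v)))"
  have [measurable]: "V \<in> borel_measurable M"
    unfolding V_def by measurable
  have intV: "integrable M V"
    using int1 by (rule Bochner_Integration.integrable_bound) (auto simp: V_def q_def g_def p_nonneg)
  have "(LINT y : S | M. p y *\<^sub>R u y) = integral\<^sup>L M (\<lambda>y. V y + q y *\<^sub>R v)"
    unfolding set_lebesgue_integral_def
    by (intro Bochner_Integration.integral_cong) (simp_all add: V_def q_def algebra_simps)
  then have "norm ((LINT y : S | M. p y *\<^sub>R u y) - v) = norm (integral\<^sup>L M V)"
    using intV int0 q_one by simp
  also have "\<dots> \<le> (\<integral>y. q y * g y \<partial>M)"
    by (rule order_trans[OF integral_norm_bound]) (simp add: V_def q_def g_def p_nonneg abs_mult)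
  finally have "norm ((LINT y : S | M. p y *\<^sub>R u y) - v) ^ 3 \<le> (\<integral>y. q y * g y \<partial>M) ^ 3"
    by (simp add: power_mono)
  also have "\<dots> \<le> (\<integral>y. q y * g y ^ 3 \<partial>M)"
    using nonneg int0 q_one int1 int3 by (rule integral_power3_le)
  finally show ?thesis
    using nn_integral_eq_integral[OF int3] nonneg by (simp add: cube_eq ennreal_leI)
qed simp

section \<open>Mollifiers\<close>

definition mollifier :: "(real^3 \<Rightarrow> real) \<Rightarrow> bool" where
  "mollifier \<phi> \<longleftrightarrow> continuous_on UNIV \<phi> \<and> (\<forall>x. 0 \<le> \<phi> x) \<and> (\<forall>x. 1 < norm x \<longrightarrow> \<phi> x = 0)
     \<and> (\<phi> has_integral 1) UNIV"

lemma smooth_fun_continuous: "smooth_fun f \<Longrightarrow> continuous_on UNIV f"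
  unfolding smooth_fun_def by (metis foldr.simps(1) id_apply)

lemma mollifier_measurable: "mollifier \<phi> \<Longrightarrow> \<phi> \<in> borel_measurable borel"
  unfolding mollifier_def by (blast intro: borel_measurable_continuous_onI)

lemma mollifier_scaled_measurable:
  assumes "mollifier \<phi>"
  shows "mollifier_scaled \<phi> l \<in> borel_measurable borel"
  using mollifier_measurable[OF assms] unfolding mollifier_scaled_def by measurable

lemma mollifier_scaled_nonneg: "mollifier \<phi> \<Longrightarrow> 0 \<le> mollifier_scaled \<phi> l y"
  by (simp add: mollifier_def mollifier_scaled_def)

lemma mollifier_scaled_eq_0:
  assumes "mollifier \<phi>" "0 < l" "l < norm y"
  shows "mollifier_scaled \<phi> l y = 0"
proof -
  have "1 < norm ((1 / l) *\<^sub>R y)"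
    using assms(2,3) by (simp add: field_simps)
  then show ?thesis
    using assms(1) by (simp add: mollifier_def mollifier_scaled_def)
qed

lemma nn_integral_mollifier_scaled:
  assumes \<phi>: "mollifier \<phi>" and l: "0 < l"
  shows "(\<integral>\<^sup>+y\<in>cball 0 l. ennreal (mollifier_scaled \<phi> l y) \<partial>lborel) = 1"
proof -
  note mollifier_measurable[OF \<phi>, measurable] mollifier_scaled_measurable[OF \<phi>, measurable]
  have "(\<integral>\<^sup>+y\<in>cball 0 l. ennreal (mollifier_scaled \<phi> l y) \<partial>lborel)
      = (\<integral>\<^sup>+y. ennreal (mollifier_scaled \<phi> l y) \<partial>lborel)"
    using mollifier_scaled_eq_0[OF \<phi> l] by (intro nn_integral_cong) (simp add: indicator_def)
  also have "\<dots> = (\<integral>\<^sup>+y. ennreal (mollifier_scaled \<phi> l y)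
      \<partial>density (distr lborel borel (\<lambda>x. 0 + l *\<^sub>R x)) (\<lambda>_. \<bar>l\<bar> ^ DIM(real^3)))"
    using l by (subst lborel_affine[of l 0]) auto
  also have "\<dots> = (\<integral>\<^sup>+x. ennreal (\<bar>l\<bar> ^ 3) * ennreal (mollifier_scaled \<phi> l (l *\<^sub>R x)) \<partial>lborel)"
    using \<phi> by (simp add: nn_integral_density nn_integral_distr)
  also have "\<dots> = (\<integral>\<^sup>+x. ennreal (\<phi> x) \<partial>lborel)"
    using l by (intro nn_integral_cong)
      (simp add: mollifier_scaled_def powr_minus powr_realpow ennreal_mult'[symmetric] field_simps)
  also have "\<dots> = 1"
    using \<phi> nn_integral_has_integral_lborel[of \<phi> 1] by (simp add: mollifier_def)
  finally show ?thesis .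
qed

lemma
  assumes \<phi>: "mollifier \<phi>" and l: "0 < l"
  shows set_integrable_mollifier_scaled: "set_integrable lborel (cball 0 l) (mollifier_scaled \<phi> l)"
    and set_integral_mollifier_scaled: "(LINT y : cball 0 l | lborel. mollifier_scaled \<phi> l y) = 1"
proof -
  have nn: "(\<integral>\<^sup>+y. ennreal (indicator (cball 0 l) y * mollifier_scaled \<phi> l y) \<partial>lborel) = 1"
    unfolding nn_integral_mollifier_scaled[OF \<phi> l, symmetric]
    by (intro nn_integral_cong) (simp add: indicator_def)
  note mollifier_scaled_measurable[OF \<phi>, measurable]
  have "(\<lambda>y. indicator (cball 0 l) y * mollifier_scaled \<phi> l y) \<in> borel_measurable borel"
    by (intro borel_measurable_times borel_measurable_indicator) auto
  then have int: "integrable lborel (\<lambda>y. indicator (cball 0 l) y * mollifier_scaled \<phi> l y)"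
    by (intro integrableI_nonneg) (auto simp: nn mollifier_scaled_nonneg[OF \<phi>])
  then show "set_integrable lborel (cball 0 l) (mollifier_scaled \<phi> l)"
    by (simp add: set_integrable_def)
  show "(LINT y : cball 0 l | lborel. mollifier_scaled \<phi> l y) = 1"
    using nn_integral_eq_integral[OF int] nn \<phi>
    by (simp add: set_lebesgue_integral_def mollifier_scaled_nonneg)
qed

definition mollifier_oscillation ::
    "(real^3 \<Rightarrow> real) \<Rightarrow> real \<Rightarrow> (real^3 \<Rightarrow> real^3) \<Rightarrow> real^3 \<Rightarrow> ennreal" where
  "mollifier_oscillation \<phi> l f x =
     (\<integral>\<^sup>+y\<in>cball 0 l. ennreal (mollifier_scaled \<phi> l y * norm (f (x - y) - f x) ^ 3) \<partial>lborel)"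

lemma mollifier_oscillation_measurable:
  assumes \<phi>: "mollifier \<phi>" and f [measurable]: "f \<in> borel_measurable borel"
  shows "mollifier_oscillation \<phi> l f \<in> borel_measurable borel"
proof -
  note mollifier_scaled_measurable[OF \<phi>, measurable]
  have [measurable]: "cball (0::real^3) l \<in> sets borel"
    by simp
  have [measurable (raw)]: "g \<in> N \<rightarrow>\<^sub>M borel \<Longrightarrow> (\<lambda>z. f (g z)) \<in> borel_measurable N"
    for g :: "'z \<Rightarrow> real^3" and N
    by (rule measurable_compose[OF _ f])
  show ?thesis
    unfolding mollifier_oscillation_def[abs_def] by measurable
qed

lemma mollify_sub_cube_le:
  assumes \<phi>: "mollifier \<phi>" and l: "0 < l" and w: "(\<lambda>x. w x t) \<in> borel_measurable borel"
  shows "ennreal (norm (mollify \<phi> l w x t - w x t) ^ 3) \<le> mollifier_oscillation \<phi> l (\<lambda>x. w x t) x"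
proof -
  have "(\<lambda>y. w (x - y) t) \<in> borel_measurable borel"
    using measurable_compose[OF _ w, of "\<lambda>y. x - y"] by simp
  with mollifier_scaled_measurable[OF \<phi>] show ?thesis
    unfolding mollify_def mollifier_oscillation_def
    by (intro norm_set_integral_sub_cube_le set_integrable_mollifier_scaled
        set_integral_mollifier_scaled mollifier_scaled_nonneg)
      (auto simp: \<phi> l)
qed

lemma L3_norm_translate_le_besov_norm:
  assumes "y \<noteq> 0"
  shows "L3_norm (D \<inter> (\<lambda>z. z + y) ` D) (\<lambda>x. f x - f (x - y))
           \<le> ennreal (norm y powr \<alpha>) * besov_norm \<alpha> D f"
proof -
  define L where "L = L3_norm (D \<inter> (\<lambda>z. z + y) ` D) (\<lambda>x. f x - f (x - y))"
  have "ennreal (norm y powr - \<alpha>) * L \<le> besov_norm \<alpha> D f"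
    unfolding besov_norm_def L_def using assms
    by (intro add_increasing SUP_upper2[where i=y]) auto
  then have "ennreal (norm y powr \<alpha>) * (ennreal (norm y powr - \<alpha>) * L)
      \<le> ennreal (norm y powr \<alpha>) * besov_norm \<alpha> D f"
    by (rule mult_left_mono) simp
  moreover have "ennreal (norm y powr \<alpha>) * ennreal (norm y powr - \<alpha>) = 1"
    using assms by (simp add: ennreal_mult'[symmetric] powr_add[symmetric])
  ultimately show ?thesis
    by (simp add: L_def mult.assoc[symmetric])
qed

lemma set_nn_integral_translate_le_besov_norm:
  assumes y: "norm y \<le> l" and \<alpha>: "0 \<le> \<alpha>" and shift: "\<And>x. x \<in> A \<Longrightarrow> x \<in> D \<and> x - y \<in> D"
  shows "(\<integral>\<^sup>+x\<in>A. ennreal (norm (f (x - y) - f x) ^ 3) \<partial>lborel)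
           \<le> (ennreal (l powr \<alpha>) * besov_norm \<alpha> D f) ^ 3"
proof (cases "y = 0")
  case False
  define E where "E = D \<inter> (\<lambda>z. z + y) ` D"
  have "A \<subseteq> E"
    using shift by (force simp: E_def intro: image_eqI[where x="_ - y"])
  then have "(\<integral>\<^sup>+x\<in>A. ennreal (norm (f (x - y) - f x) ^ 3) \<partial>lborel)
      \<le> (\<integral>\<^sup>+x\<in>E. ennreal (norm (f x - f (x - y)) ^ 3) \<partial>lborel)"
    by (intro nn_integral_mono) (auto simp: indicator_def norm_minus_commute)
  also have "\<dots> = L3_norm E (\<lambda>x. f x - f (x - y)) ^ 3"
    by (simp add: L3_norm_cube)
  also have "\<dots> \<le> (ennreal (norm y powr \<alpha>) * besov_norm \<alpha> D f) ^ 3"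
    unfolding E_def by (intro power_mono_ennreal L3_norm_translate_le_besov_norm False)
  also have "\<dots> \<le> (ennreal (l powr \<alpha>) * besov_norm \<alpha> D f) ^ 3"
    using y \<alpha> by (intro power_mono_ennreal mult_right_mono ennreal_leI powr_mono2) auto
  finally show ?thesis .
qed simp

lemma set_nn_integral_mollifier_oscillation_le:
  assumes \<phi>: "mollifier \<phi>" and l: "0 < l" and \<alpha>: "0 \<le> \<alpha>"
    and f [measurable]: "f \<in> borel_measurable borel" and A [measurable]: "A \<in> sets borel"
    and shift: "\<And>x y. x \<in> A \<Longrightarrow> norm y \<le> l \<Longrightarrow> x \<in> D \<and> x - y \<in> D"
  shows "(\<integral>\<^sup>+x\<in>A. mollifier_oscillation \<phi> l f x \<partial>lborel) \<le> (ennreal (l powr \<alpha>) * besov_norm \<alpha> D f) ^ 3"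
proof -
  define R where "R = (ennreal (l powr \<alpha>) * besov_norm \<alpha> D f) ^ 3"
  note mollifier_scaled_measurable[OF \<phi>, measurable]
  have [measurable]: "cball (0::real^3) l \<in> sets borel"
    by simp
  have [measurable (raw)]: "g \<in> N \<rightarrow>\<^sub>M borel \<Longrightarrow> (\<lambda>z. f (g z)) \<in> borel_measurable N"
    for g :: "'z \<Rightarrow> real^3" and N
    by (rule measurable_compose[OF _ f])
  have "(\<integral>\<^sup>+x\<in>A. mollifier_oscillation \<phi> l f x \<partial>lborel)
      = (\<integral>\<^sup>+x. \<integral>\<^sup>+y. ennreal (mollifier_scaled \<phi> l y * norm (f (x - y) - f x) ^ 3)
            * indicator (cball 0 l) y * indicator A x \<partial>lborel \<partial>lborel)"
    unfolding mollifier_oscillation_def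
    by (intro nn_integral_cong nn_integral_multc[symmetric]) measurable
  also have "\<dots> = (\<integral>\<^sup>+y. \<integral>\<^sup>+x. ennreal (mollifier_scaled \<phi> l y * norm (f (x - y) - f x) ^ 3)
            * indicator (cball 0 l) y * indicator A x \<partial>lborel \<partial>lborel)"
    by (rule lborel_pair.Fubini') measurable
  also have "\<dots> = (\<integral>\<^sup>+y\<in>cball 0 l. ennreal (mollifier_scaled \<phi> l y)
            * (\<integral>\<^sup>+x\<in>A. ennreal (norm (f (x - y) - f x) ^ 3) \<partial>lborel) \<partial>lborel)"
    by (intro nn_integral_cong)
      (simp add: nn_integral_cmult[symmetric] ennreal_mult mollifier_scaled_nonneg[OF \<phi>] ac_simps)
  also have "\<dots> \<le> (\<integral>\<^sup>+y\<in>cball 0 l. ennreal (mollifier_scaled \<phi> l y) * R \<partial>lborel)"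
    using set_nn_integral_translate_le_besov_norm[OF _ \<alpha> shift, of _ l]
    by (intro nn_integral_mono) (auto simp: R_def indicator_def intro: mult_left_mono)
  also have "\<dots> = (\<integral>\<^sup>+y\<in>cball 0 l. ennreal (mollifier_scaled \<phi> l y) \<partial>lborel) * R"
    by (subst nn_integral_multc[symmetric]) (measurable, simp add: ac_simps)
  also have "\<dots> = R"
    by (simp add: nn_integral_mollifier_scaled[OF \<phi> l])
  finally show ?thesis
    by (simp add: R_def)
qed

section \<open>Gradient of the cut-off and geometry of the layers\<close>

lemma GDERIV_unique:
  assumes "GDERIV f x :> D" "GDERIV f x :> D'"
  shows "D = D'"
proof -
  have "(\<lambda>h. h \<bullet> D) = (\<lambda>h. h \<bullet> D')"
    using assms unfolding gderiv_def by (rule has_derivative_unique)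
  then have "(D - D') \<bullet> D = (D - D') \<bullet> D'"
    by metis
  then have "(D - D') \<bullet> (D - D') = 0"
    by (simp add: inner_diff_right)
  then show ?thesis
    by simp
qed

lemma grad_eqI: "GDERIV f x :> D \<Longrightarrow> grad f x = D"
  unfolding grad_def using GDERIV_unique by blast

lemma grad_compose:
  assumes "GDERIV f x :> D" "g differentiable at (f x)"
  shows "grad (\<lambda>y. g (f y)) x = deriv g (f x) *\<^sub>R D"
  using assms by (intro grad_eqI GDERIV_DERIV_compose) (simp_all add: DERIV_deriv_iff_real_differentiable)

lemma smooth_real_differentiable: "smooth_real f \<Longrightarrow> f differentiable at s"
  unfolding smooth_real_def differentiable_on_def by (metis funpow_0 UNIV_I)

lemma abs_inner_scaleR_le:
  fixes a b n :: "'a::real_inner"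
  assumes "norm n \<le> M" "\<bar>s\<bar> \<le> k"
  shows "\<bar>a \<bullet> (s *\<^sub>R n)\<bar> \<le> k * (\<bar>b \<bullet> n\<bar> + M * norm (a - b))"
proof -
  have "\<bar>(a - b) \<bullet> n\<bar> \<le> norm (a - b) * norm n"
    by (rule Cauchy_Schwarz_ineq2)
  also have "\<dots> \<le> M * norm (a - b)"
    using mult_left_mono[OF assms(1) norm_ge_zero[of "a - b"]] by (simp add: mult.commute)
  finally have "\<bar>a \<bullet> n\<bar> \<le> \<bar>b \<bullet> n\<bar> + M * norm (a - b)"
    using abs_triangle_ineq[of "b \<bullet> n" "(a - b) \<bullet> n"] by (simp add: inner_diff_left)
  then show ?thesis
    using assms(2) by (simp add: abs_mult mult_mono)
qed

lemma abs_inner_grad_comp_le: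
  fixes d :: "'a::real_inner \<Rightarrow> real"
  assumes "GDERIV d x :> - n" "\<theta> differentiable at (d x)" "norm n \<le> M" "\<bar>deriv \<theta> (d x)\<bar> \<le> k"
  shows "\<bar>a \<bullet> grad (\<lambda>y. \<theta> (d y)) x\<bar> \<le> k * (\<bar>b \<bullet> n\<bar> + M * norm (a - b))"
proof -
  have "grad (\<lambda>y. \<theta> (d y)) x = (- deriv \<theta> (d x)) *\<^sub>R n"
    using grad_compose[OF assms(1,2)] by simp
  then show ?thesis
    using abs_inner_scaleR_le[OF assms(3), of "- deriv \<theta> (d x)"] assms(4) by simp
qed

lemma mem_of_dist_lt_infdist_frontier:
  fixes \<Omega> :: "'a::real_normed_vector set"
  assumes "open \<Omega>" "x \<in> \<Omega>" "dist x z < infdist x (frontier \<Omega>)"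
  shows "z \<in> \<Omega>"
proof (rule ccontr)
  assume "z \<notin> \<Omega>"
  let ?B = "ball x (infdist x (frontier \<Omega>))"
  have "x \<in> ?B" "z \<in> ?B"
    using assms(3) zero_le_dist[of x z] by (auto simp del: zero_le_dist)
  then have "?B \<inter> frontier \<Omega> \<noteq> {}"
    using assms(2) \<open>z \<notin> \<Omega>\<close> by (intro connected_Int_frontier) blast+
  then obtain p where "p \<in> frontier \<Omega>" "dist x p < infdist x (frontier \<Omega>)"
    by auto
  then show False
    using infdist_le[of p "frontier \<Omega>" x] by simp
qed

lemma continuous_dist_bd: "continuous_on UNIV (dist_bd \<Omega>)"
  unfolding dist_bd_def[abs_def] by (intro continuous_on_infdist continuous_on_id)

lemma open_layer:
  assumes "open \<Omega>"
  shows "open (layer \<Omega> e)"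
proof -
  have "layer \<Omega> e = \<Omega> \<inter> {x. dist_bd \<Omega> x < e}"
    by (auto simp: layer_def)
  then show ?thesis
    using assms by (simp add: open_Int open_Collect_less continuous_dist_bd)
qed

lemma layer_mono: "e \<le> e' \<Longrightarrow> layer \<Omega> e \<subseteq> layer \<Omega> e'"
  by (auto simp: layer_def)

lemma shift_mem_inner_part:
  assumes \<Omega>: "open \<Omega>" and x: "x \<in> \<Omega>" "h - l \<le> dist_bd \<Omega> x"
    and y: "norm y \<le> l" and e: "0 \<le> e" "e < h - 2 * l"
  shows "x - y \<in> inner_part \<Omega> e"
proof -
  have "closure (layer \<Omega> e) \<subseteq> {z. dist_bd \<Omega> z \<le> e}"
    by (intro closure_minimal closed_Collect_le continuous_dist_bd continuous_on_const)
      (auto simp: layer_def)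
  moreover have "x - y \<in> \<Omega>"
    using mem_of_dist_lt_infdist_frontier[OF \<Omega> x(1), of "x - y"] x(2) y e
    by (simp add: dist_bd_def dist_norm)
  moreover have "e < dist_bd \<Omega> (x - y)"
    using infdist_triangle[of x "frontier \<Omega>" "x - y"] x(2) y e
    by (simp add: dist_bd_def dist_norm)
  ultimately show ?thesis
    by (force simp: inner_part_def)
qed

lemma continuous_on_closure_bounded_borel:
  fixes G :: "'a::euclidean_space \<Rightarrow> 'b::euclidean_space"
  assumes "open S" "bounded S" "continuous_on (closure S) G"
  shows "\<exists>g M. g \<in> borel_measurable borel \<and> 0 \<le> M \<and> (\<forall>x\<in>S. g x = G x \<and> norm (G x) \<le> M)"
proof -
  have "compact (closure S)"
    using assms(2) by (simp add: compact_closure)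
  then obtain M where M: "\<forall>y\<in>G ` closure S. norm y \<le> M"
    using compact_imp_bounded[OF compact_continuous_image[OF assms(3)]]
    unfolding bounded_iff by blast
  have "(\<lambda>x. indicator S x *\<^sub>R G x) \<in> borel_measurable borel"
    using assms(1) continuous_on_subset[OF assms(3) closure_subset]
    by (intro borel_measurable_continuous_on_indicator) auto
  moreover have "\<forall>x\<in>S. indicator S x *\<^sub>R G x = G x \<and> norm (G x) \<le> max M 0"
    using M closure_subset by fastforce
  ultimately show ?thesis
    by (intro exI[of _ "\<lambda>x. indicator S x *\<^sub>R G x"] exI[of _ "max M 0"]) auto
qed

lemma outward_normal_layer_borel_bounded:
  assumes \<Omega>: "open \<Omega>" "bounded \<Omega>"
    and C1: "\<exists>G. continuous_on (closure (layer \<Omega> h0)) G \<and> (\<forall>x\<in>layer \<Omega> h0. GDERIV (dist_bd \<Omega>) x :> G x)"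
    and grad: "\<forall>x\<in>layer \<Omega> h0. GDERIV (dist_bd \<Omega>) x :> - outward_normal \<Omega> (nearest_bd \<Omega> x)"
  obtains \<nu> M where "\<nu> \<in> borel_measurable borel" "0 \<le> M"
    "\<And>x. x \<in> layer \<Omega> h0 \<Longrightarrow> outward_normal \<Omega> (nearest_bd \<Omega> x) = \<nu> x \<and> norm (\<nu> x) \<le> M"
proof -
  obtain G where G: "continuous_on (closure (layer \<Omega> h0)) G"
      "\<And>x. x \<in> layer \<Omega> h0 \<Longrightarrow> GDERIV (dist_bd \<Omega>) x :> G x"
    using C1 by blast
  have "bounded (layer \<Omega> h0)"
    using \<Omega>(2) by (rule bounded_subset) (auto simp: layer_def)
  then obtain g M where g: "g \<in> borel_measurable borel" "0 \<le> M"
      and g_eq: "\<And>x. x \<in> layer \<Omega> h0 \<Longrightarrow> g x = G x \<and> norm (G x) \<le> M"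
    using continuous_on_closure_bounded_borel[OF open_layer[OF \<Omega>(1)] _ G(1)] by blast
  show thesis
  proof
    show "(\<lambda>x. - g x) \<in> borel_measurable borel"
      using g(1) by measurable
    show "outward_normal \<Omega> (nearest_bd \<Omega> x) = - g x \<and> norm (- g x) \<le> M" if "x \<in> layer \<Omega> h0" for x
    proof -
      have "- outward_normal \<Omega> (nearest_bd \<Omega> x) = G x"
        by (rule GDERIV_unique[OF grad[rule_format, OF that] G(2)[OF that]])
      then have "outward_normal \<Omega> (nearest_bd \<Omega> x) = - G x"
        by (simp add: minus_equation_iff)
      then show ?thesis
        using g_eq[OF that] by auto
    qed
  qed (fact g(2))
qed

lemma le_powr_mult_SUP_divide:
  fixes F :: "real \<Rightarrow> ennreal"
  assumes "0 < h"
  shows "F h \<le> ennreal (h powr \<alpha>) * (SUP e\<in>{0<..}. F e / ennreal (e powr \<alpha>))"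
proof -
  have "F h = ennreal (h powr \<alpha>) * (F h / ennreal (h powr \<alpha>))"
    using assms by (simp add: ennreal_times_divide mult.commute[of "ennreal _"] ennreal_mult_divide_eq)
  also have "\<dots> \<le> ennreal (h powr \<alpha>) * (SUP e\<in>{0<..}. F e / ennreal (e powr \<alpha>))"
    using assms by (intro mult_left_mono SUP_upper) auto
  finally show ?thesis .
qed

lemma L3_norm_cube_le_split:
  fixes F :: "real^3 \<Rightarrow> 'a::real_normed_vector" and g :: "real^3 \<Rightarrow> 'b::real_normed_vector"
    and e :: "real^3 \<Rightarrow> 'c::real_normed_vector" and P :: "real^3 \<Rightarrow> ennreal"
  assumes [measurable]: "A \<in> sets borel" "g \<in> borel_measurable borel" "P \<in> borel_measurable borel"
    and F: "\<And>x. x \<in> A \<Longrightarrow> ennreal (norm (F x)) \<le> k * (ennreal (norm (g x)) + m * ennreal (norm (e x)))"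
    and P: "\<And>x. x \<in> A \<Longrightarrow> ennreal (norm (e x) ^ 3) \<le> P x"
  shows "L3_norm A F ^ 3 \<le> 8 * k ^ 3 * (L3_norm A g ^ 3 + m ^ 3 * (\<integral>\<^sup>+x\<in>A. P x \<partial>lborel))"
proof -
  have "ennreal (norm (F x) ^ 3) \<le> 8 * k ^ 3 * (ennreal (norm (g x) ^ 3) + m ^ 3 * P x)"
    if "x \<in> A" for x
  proof -
    have "ennreal (norm (F x) ^ 3) \<le> (k * (ennreal (norm (g x)) + m * ennreal (norm (e x)))) ^ 3"
      using power_mono_ennreal[OF F[OF that], of 3] by (simp add: ennreal_power)
    also have "\<dots> \<le> k ^ 3 * (8 * (ennreal (norm (g x)) ^ 3 + (m * ennreal (norm (e x))) ^ 3))"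
      unfolding power_mult_distrib[of k] by (intro mult_left_mono ennreal_add_power3_le) simp
    also have "\<dots> \<le> k ^ 3 * (8 * (ennreal (norm (g x) ^ 3) + m ^ 3 * P x))"
      using P[OF that] by (intro mult_left_mono add_left_mono)
        (simp_all add: ennreal_power power_mult_distrib mult_left_mono)
    finally show ?thesis
      by (simp add: algebra_simps)
  qed
  then have "L3_norm A F ^ 3 \<le> (\<integral>\<^sup>+x. 8 * k ^ 3 * (ennreal (norm (g x) ^ 3) * indicator A x
      + m ^ 3 * (P x * indicator A x)) \<partial>lborel)"
    unfolding L3_norm_cube
    by (intro nn_integral_mono) (auto simp: indicator_def distrib_left)
  also have "\<dots> = 8 * k ^ 3 * (L3_norm A g ^ 3 + m ^ 3 * (\<integral>\<^sup>+x\<in>A. P x \<partial>lborel))"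
    by (simp add: L3_norm_cube nn_integral_cmult nn_integral_add)
  finally show ?thesis .
qed

lemma L3_time_cube_le_split:
  fixes N I J S B :: "real \<Rightarrow> ennreal"
  assumes [measurable]: "I \<in> borel_measurable borel" "J \<in> borel_measurable borel"
    and N: "\<And>t. t \<in> {0..<T} \<Longrightarrow> N t ^ 3 \<le> k * (I t + m * J t)"
    and I: "\<And>t. I t \<le> (ennreal a * S t) ^ 3" and J: "\<And>t. J t \<le> (ennreal b * B t) ^ 3"
    and ab: "0 \<le> a" "0 \<le> b"
  shows "L3_time T N ^ 3 \<le> k * ((ennreal a * L3_time T S) ^ 3 + m * (ennreal b * L3_time T B) ^ 3)"
proof -
  have "L3_time T N ^ 3 \<le> (\<integral>\<^sup>+t. k * (I t * indicator {0..<T} t + m * (J t * indicator {0..<T} t)) \<partial>lborel)"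
    unfolding L3_time_cube using N by (intro nn_integral_mono) (auto simp: indicator_def)
  also have "\<dots> = k * ((\<integral>\<^sup>+t\<in>{0..<T}. I t \<partial>lborel) + m * (\<integral>\<^sup>+t\<in>{0..<T}. J t \<partial>lborel))"
    by (simp add: nn_integral_cmult nn_integral_add)
  also have "\<dots> \<le> k * ((\<integral>\<^sup>+t. ennreal (a ^ 3) * (S t ^ 3 * indicator {0..<T} t) \<partial>lborel)
      + m * (\<integral>\<^sup>+t. ennreal (b ^ 3) * (B t ^ 3 * indicator {0..<T} t) \<partial>lborel))"
    using I J ab by (intro mult_left_mono add_mono nn_integral_mono)
      (auto simp: indicator_def ennreal_power power_mult_distrib)
  also have "\<dots> \<le> k * ((ennreal a * L3_time T S) ^ 3 + m * (ennreal b * L3_time T B) ^ 3)"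
    using nn_integral_cmult_le[of "a ^ 3"] nn_integral_cmult_le[of "b ^ 3"] ab
    by (intro mult_left_mono add_mono)
      (auto simp: L3_time_cube power_mult_distrib ennreal_power)
  finally show ?thesis .
qed

lemma power3_le_sum_cubes_imp_le:
  fixes Q Y :: ennreal
  assumes Q: "Q ^ 3 \<le> 8 * ennreal (c / l) ^ 3 * ((ennreal a * ennreal X) ^ 3 + ennreal M ^ 3 * (ennreal b * Y) ^ 3)"
    and c: "0 \<le> c" "0 < l" and M: "0 \<le> M" "0 \<le> X"
  shows "Q \<le> ennreal (2 * c * (M + X)) * ennreal (1 / l) * (ennreal b * Y + ennreal a)"
proof -
  define K where "K = ennreal (c / l)"
  define u where "u = ennreal a * ennreal X"
  define v where "v = ennreal M * (ennreal b * Y)"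
  have "Q ^ 3 \<le> 8 * K ^ 3 * (u ^ 3 + v ^ 3)"
    using Q by (simp add: K_def u_def v_def power_mult_distrib)
  also have "\<dots> \<le> (2 * K * (u + v)) ^ 3"
    using ennreal_power3_add_le[of u v] by (simp add: power_mult_distrib mult_left_mono)
  finally have "Q \<le> 2 * K * (u + v)"
    by (rule ennreal_le_of_power3_le)
  also have "u + v \<le> ennreal (M + X) * (ennreal b * Y + ennreal a)"
    using M unfolding u_def v_def
    by (simp add: distrib_left distrib_right ac_simps add_increasing2 add_mono mult_left_mono)
  then have "2 * K * (u + v) \<le> 2 * K * ennreal (M + X) * (ennreal b * Y + ennreal a)"
    by (simp add: mult_left_mono mult.assoc)
  also have "2 * K * ennreal (M + X) = ennreal (2 * c * (M + X)) * ennreal (1 / l)"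
  proof -
    have "2 * K * ennreal (M + X) = ennreal (2 * (c / l)) * ennreal (M + X)"
      unfolding K_def by (subst ennreal_mult') simp_all
    also have "\<dots> = ennreal (2 * (c / l) * (M + X))"
      using c by (intro ennreal_mult'[symmetric]) simp
    also have "2 * (c / l) * (M + X) = 2 * c * (M + X) * (1 / l)"
      by simp
    also have "ennreal \<dots> = ennreal (2 * c * (M + X)) * ennreal (1 / l)"
      using c M by (intro ennreal_mult') simp
    finally show ?thesis .
  qed
  finally show ?thesis .
qed

lemma L3_norm_mollify_inner_grad_cutoff_cube_le:
  fixes \<Omega> :: "(real^3) set" and w :: "real^3 \<Rightarrow> real \<Rightarrow> real^3" and \<nu> :: "real^3 \<Rightarrow> real^3"
  assumes \<Omega>: "open \<Omega>" and \<phi>: "mollifier \<phi>" and l: "0 < l"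
    and w [measurable]: "(\<lambda>x. w x t) \<in> borel_measurable borel" and \<nu> [measurable]: "\<nu> \<in> borel_measurable borel"
    and \<nu>_grad: "\<And>x. x \<in> layer \<Omega> h \<Longrightarrow> GDERIV (dist_bd \<Omega>) x :> - \<nu> x"
    and \<nu>_bound: "\<And>x. x \<in> layer \<Omega> h \<Longrightarrow> norm (\<nu> x) \<le> M" and M: "0 \<le> M"
    and \<theta>: "\<And>s. \<theta> differentiable at s" "\<And>s. \<bar>deriv \<theta> s\<bar> \<le> c / l"
  defines "A \<equiv> layer \<Omega> h - layer \<Omega> (h - l)"
  shows "L3_norm A (\<lambda>x. mollify \<phi> l w x t \<bullet> grad (\<lambda>y. \<theta> (dist_bd \<Omega> y)) x) ^ 3
           \<le> 8 * ennreal (c / l) ^ 3 * (L3_norm A (\<lambda>x. w x t \<bullet> \<nu> x) ^ 3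
                + ennreal M ^ 3 * (\<integral>\<^sup>+x\<in>A. mollifier_oscillation \<phi> l (\<lambda>x. w x t) x \<partial>lborel))"
proof (rule L3_norm_cube_le_split[where e="\<lambda>x. mollify \<phi> l w x t - w x t"])
  show "A \<in> sets borel"
    unfolding A_def using open_layer[OF \<Omega>] by auto
  show "(\<lambda>x. w x t \<bullet> \<nu> x) \<in> borel_measurable borel"
    by measurable
  show "mollifier_oscillation \<phi> l (\<lambda>x. w x t) \<in> borel_measurable borel"
    using \<phi> w by (rule mollifier_oscillation_measurable)
  show "ennreal (norm (mollify \<phi> l w x t - w x t) ^ 3) \<le> mollifier_oscillation \<phi> l (\<lambda>x. w x t) x" for x
    using \<phi> l w by (rule mollify_sub_cube_le)
  show "ennreal (norm (mollify \<phi> l w x t \<bullet> grad (\<lambda>y. \<theta> (dist_bd \<Omega> y)) x))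
      \<le> ennreal (c / l) * (ennreal (norm (w x t \<bullet> \<nu> x)) + ennreal M * ennreal (norm (mollify \<phi> l w x t - w x t)))"
    if "x \<in> A" for x
  proof -
    have "x \<in> layer \<Omega> h"
      using that by (simp add: A_def)
    then have "\<bar>mollify \<phi> l w x t \<bullet> grad (\<lambda>y. \<theta> (dist_bd \<Omega> y)) x\<bar>
        \<le> c / l * (\<bar>w x t \<bullet> \<nu> x\<bar> + M * norm (mollify \<phi> l w x t - w x t))"
      by (intro abs_inner_grad_comp_le \<nu>_grad \<nu>_bound \<theta>)
    moreover have "0 \<le> c / l"
      using \<theta>(2)[of 0] by (meson abs_ge_zero order_trans)
    ultimately show ?thesis
      using M by (simp add: ennreal_mult'[symmetric] ennreal_plus[symmetric] del: ennreal_plus)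
  qed
qed

lemma L3_time_mollify_inner_grad_cutoff_le:
  fixes \<Omega> :: "(real^3) set" and w :: "real^3 \<Rightarrow> real \<Rightarrow> real^3"
    and \<nu> \<nu>' :: "real^3 \<Rightarrow> real^3" and \<theta> :: "real \<Rightarrow> real"
  assumes \<Omega>: "open \<Omega>" and \<phi>: "mollifier \<phi>" and l: "0 < l" "4 * l < h" and \<alpha>: "0 \<le> \<alpha>"
    and w [measurable]: "(\<lambda>p. w (fst p) (snd p)) \<in> borel_measurable (lborel \<Otimes>\<^sub>M lborel)"
    and \<nu> [measurable]: "\<nu> \<in> borel_measurable borel"
    and \<nu>_grad: "\<And>x. x \<in> layer \<Omega> h \<Longrightarrow> GDERIV (dist_bd \<Omega>) x :> - \<nu> x"
    and \<nu>_bound: "\<And>x. x \<in> layer \<Omega> h \<Longrightarrow> norm (\<nu> x) \<le> M" and M: "0 \<le> M"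
    and \<nu>': "\<And>x. x \<in> layer \<Omega> h \<Longrightarrow> \<nu>' x = \<nu> x"
    and X: "L3_time T (\<lambda>t. SUP e\<in>{0<..}. L3_norm (layer \<Omega> e) (\<lambda>x. w x t \<bullet> \<nu>' x) / ennreal (e powr \<alpha>))
              = ennreal X" "0 \<le> X"
    and \<theta>: "\<And>s. \<theta> differentiable at s" "\<And>s. \<bar>deriv \<theta> s\<bar> \<le> c / l"
  shows "L3_time T (\<lambda>t. L3_norm (layer \<Omega> h - layer \<Omega> (h - l))
            (\<lambda>x. mollify \<phi> l w x t \<bullet> grad (\<lambda>y. \<theta> (dist_bd \<Omega> y)) x))
         \<le> ennreal (2 * c * (M + X)) * ennreal (1 / l) *
            (ennreal (l powr \<alpha>) * L3_time T (\<lambda>t. besov_norm \<alpha> (inner_part \<Omega> (h / 2)) (\<lambda>x. w x t))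
             + ennreal (h powr \<alpha>))"
proof -
  define A where "A = layer \<Omega> h - layer \<Omega> (h - l)"
  define I where "I t = L3_norm A (\<lambda>x. w x t \<bullet> \<nu> x) ^ 3" for t
  define J where "J t = (\<integral>\<^sup>+x\<in>A. mollifier_oscillation \<phi> l (\<lambda>x. w x t) x \<partial>lborel)" for t
  have "0 \<le> c / l"
    using \<theta>(2)[of 0] by (meson abs_ge_zero order_trans)
  then have c: "0 \<le> c"
    using l(1) by (simp add: zero_le_divide_iff)
  have A_sets [measurable]: "A \<in> sets borel" "A \<in> sets lborel"
    unfolding A_def using open_layer[OF \<Omega>] by auto
  have [measurable]: "cball (0::real^3) l \<in> sets borel"
    by simp
  have A_mem: "x \<in> \<Omega>" "h - l \<le> dist_bd \<Omega> x" "x \<in> layer \<Omega> h" if "x \<in> A" for x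
    using that by (auto simp: A_def layer_def)
  have [measurable (raw)]: "f \<in> N \<rightarrow>\<^sub>M borel \<Longrightarrow> g \<in> N \<rightarrow>\<^sub>M borel \<Longrightarrow> (\<lambda>z. w (f z) (g z)) \<in> borel_measurable N"
    for f :: "'z \<Rightarrow> real^3" and g :: "'z \<Rightarrow> real" and N
    using measurable_compose[OF measurable_Pair[of f N lborel g lborel] w]
    by (simp add: measurable_lborel1)
  note mollifier_scaled_measurable[OF \<phi>, measurable]
  have shift: "x - y \<in> inner_part \<Omega> (h / 2)" if "x \<in> A" "norm y \<le> l" for x y
    using shift_mem_inner_part[OF \<Omega> A_mem(1,2)[OF that(1)] that(2)] l by simp
  have "L3_time T (\<lambda>t. L3_norm A (\<lambda>x. mollify \<phi> l w x t \<bullet> grad (\<lambda>y. \<theta> (dist_bd \<Omega> y)) x)) ^ 3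
      \<le> 8 * ennreal (c / l) ^ 3 * ((ennreal (h powr \<alpha>) * ennreal X) ^ 3 + ennreal M ^ 3 *
           (ennreal (l powr \<alpha>) * L3_time T (\<lambda>t. besov_norm \<alpha> (inner_part \<Omega> (h / 2)) (\<lambda>x. w x t))) ^ 3)"
    unfolding X(1)[symmetric]
  proof (rule L3_time_cube_le_split[where I=I and J=J])
    show "I \<in> borel_measurable borel"
      unfolding I_def[abs_def] L3_norm_cube by measurable
    show "J \<in> borel_measurable borel"
      unfolding J_def[abs_def] mollifier_oscillation_def by measurable
    show "L3_norm A (\<lambda>x. mollify \<phi> l w x t \<bullet> grad (\<lambda>y. \<theta> (dist_bd \<Omega> y)) x) ^ 3
        \<le> 8 * ennreal (c / l) ^ 3 * (I t + ennreal M ^ 3 * J t)" for t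
      unfolding A_def I_def J_def
      by (rule L3_norm_mollify_inner_grad_cutoff_cube_le[OF \<Omega> \<phi> l(1) _ \<nu> \<nu>_grad \<nu>_bound M \<theta>]) measurable
    show "I t \<le> (ennreal (h powr \<alpha>)
        * (SUP e\<in>{0<..}. L3_norm (layer \<Omega> e) (\<lambda>x. w x t \<bullet> \<nu>' x) / ennreal (e powr \<alpha>))) ^ 3" for t
    proof -
      have "I t \<le> L3_norm (layer \<Omega> h) (\<lambda>x. w x t \<bullet> \<nu>' x) ^ 3"
        unfolding I_def L3_norm_cube using A_mem \<nu>' by (intro nn_integral_mono) (auto simp: indicator_def)
      also have "\<dots> \<le> (ennreal (h powr \<alpha>)
          * (SUP e\<in>{0<..}. L3_norm (layer \<Omega> e) (\<lambda>x. w x t \<bullet> \<nu>' x) / ennreal (e powr \<alpha>))) ^ 3"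
        using l by (intro power_mono_ennreal le_powr_mult_SUP_divide) simp
      finally show ?thesis .
    qed
    show "J t \<le> (ennreal (l powr \<alpha>) * besov_norm \<alpha> (inner_part \<Omega> (h / 2)) (\<lambda>x. w x t)) ^ 3" for t
      unfolding J_def using shift shift[of _ 0] l(1) A_sets
      by (intro set_nn_integral_mollifier_oscillation_le[OF \<phi> l(1) \<alpha>]) auto
  qed simp_all
  then show ?thesis
    unfolding A_def using c l(1) M X(2) by (rule power3_le_sum_cubes_imp_le)
qed

theorem lemma3p2:
  fixes \<Omega> :: "(real^3) set" and T \<alpha> h0 C\<eta> :: real
    and w :: "real^3 \<Rightarrow> real \<Rightarrow> real^3"
    and \<eta> :: "real \<Rightarrow> real \<Rightarrow> real \<Rightarrow> real"
    and \<phi> :: "real^3 \<Rightarrow> real"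
  assumes dom: "C2_domain \<Omega>"
    and T: "T > 0"
    and \<alpha>: "0 < \<alpha>" "\<alpha> < 1"
    and h0: "h0 > 0"
    and h0_unique: "\<forall>x\<in>layer \<Omega> h0. \<exists>!y. y \<in> frontier \<Omega> \<and> dist x y = dist_bd \<Omega> x"
    and h0_C1: "\<exists>G. continuous_on (closure (layer \<Omega> h0)) G \<and>
                 (\<forall>x\<in>layer \<Omega> h0. GDERIV (dist_bd \<Omega>) x :> G x)"
    and h0_grad: "\<forall>x\<in>layer \<Omega> h0.
                 GDERIV (dist_bd \<Omega>) x :> - outward_normal \<Omega> (nearest_bd \<Omega> x)"
    and w_meas: "(\<lambda>p. w (fst p) (snd p)) \<in> borel_measurable (lborel \<Otimes>\<^sub>M lborel)"
    and w_besov: "\<forall>\<Omega>'. open \<Omega>' \<and> compact (closure \<Omega>') \<and> closure \<Omega>' \<subseteq> \<Omega> \<longrightarrow>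
                 L3_time T (\<lambda>t. besov_norm \<alpha> \<Omega>' (\<lambda>x. w x t)) < top"
    and w_normal: "L3_time T (\<lambda>t. SUP h \<in> {0<..}.
                 L3_norm (layer \<Omega> h) (\<lambda>x. w x t \<bullet> outward_normal \<Omega> (nearest_bd \<Omega> x))
                   / ennreal (h powr \<alpha>)) < top"
    and \<eta>_smooth: "\<forall>h l. 0 < l \<and> l < h \<longrightarrow> smooth_real (\<eta> h l)"
    and \<eta>_zero: "\<forall>h l s. 0 < l \<and> l < h \<and> s \<le> h - l \<longrightarrow> \<eta> h l s = 0"
    and \<eta>_one: "\<forall>h l s. 0 < l \<and> l < h \<and> h \<le> s \<longrightarrow> \<eta> h l s = 1"
    and \<eta>_deriv: "\<forall>h l s. 0 < l \<and> l < h \<longrightarrow> \<bar>deriv (\<eta> h l) s\<bar> \<le> C\<eta> / l"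
    and \<phi>_smooth: "smooth_fun \<phi>"
    and \<phi>_nonneg: "\<forall>x. \<phi> x \<ge> 0"
    and \<phi>_radial: "\<forall>x y. norm x = norm y \<longrightarrow> \<phi> x = \<phi> y"
    and \<phi>_supp: "\<forall>x. norm x > 1 \<longrightarrow> \<phi> x = 0"
    and \<phi>_int: "(\<phi> has_integral 1) UNIV"
  shows "\<exists>C::real. \<forall>h. 0 < h \<and> h < h0 \<longrightarrow>
     (let l = h / 16 in
       L3_time T (\<lambda>t. L3_norm (layer \<Omega> h - layer \<Omega> (h - l))
          (\<lambda>x. mollify \<phi> l w x t \<bullet> grad (\<lambda>y. \<eta> h l (dist_bd \<Omega> y)) x))
       \<le> ennreal C * ennreal (1 / l) *
           (ennreal (l powr \<alpha>) * L3_time T (\<lambda>t. besov_norm \<alpha> (inner_part \<Omega> (h / 2)) (\<lambda>x. w x t))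
            + ennreal (h powr \<alpha>)))"
proof -
  have \<Omega>: "open \<Omega>" "bounded \<Omega>"
    using dom by (auto simp: C2_domain_def)
  obtain \<nu> M where \<nu>: "\<nu> \<in> borel_measurable borel" and M: "0 \<le> M"
    and \<nu>_eq: "\<And>x. x \<in> layer \<Omega> h0 \<Longrightarrow> outward_normal \<Omega> (nearest_bd \<Omega> x) = \<nu> x \<and> norm (\<nu> x) \<le> M"
    using outward_normal_layer_borel_bounded[OF \<Omega> h0_C1 h0_grad] by blast
  obtain X where X: "L3_time T (\<lambda>t. SUP e\<in>{0<..}.
      L3_norm (layer \<Omega> e) (\<lambda>x. w x t \<bullet> outward_normal \<Omega> (nearest_bd \<Omega> x)) / ennreal (e powr \<alpha>))
      = ennreal X" "0 \<le> X"
    using w_normal by (cases rule: ennreal_cases) auto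
  have \<phi>: "mollifier \<phi>"
    using \<phi>_smooth \<phi>_nonneg \<phi>_supp \<phi>_int by (simp add: mollifier_def smooth_fun_continuous)
  have \<nu>_layer: "GDERIV (dist_bd \<Omega>) x :> - \<nu> x" "norm (\<nu> x) \<le> M"
      "outward_normal \<Omega> (nearest_bd \<Omega> x) = \<nu> x" if "x \<in> layer \<Omega> h" "h < h0" for x h
    using h0_grad \<nu>_eq layer_mono[of h h0 \<Omega>] that by auto
  have \<eta>_layer: "\<eta> h (h / 16) differentiable at s" "\<bar>deriv (\<eta> h (h / 16)) s\<bar> \<le> C\<eta> * 16 / h"
    if "0 < h" for h s
    using smooth_real_differentiable \<eta>_smooth \<eta>_deriv[rule_format, of "h / 16" h s] that by auto
  show ?thesis
    unfolding Let_def
    by (intro exI[of _ "2 * C\<eta> * (M + X)"] allI impI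
        L3_time_mollify_inner_grad_cutoff_le[OF \<Omega>(1) \<phi> _ _ _ w_meas \<nu> _ _ M _ X])
      (use \<alpha>(1) in \<open>auto intro: \<nu>_layer \<eta>_layer\<close>)
qed

end
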